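(* Let $n \ge 3$, let $x_1, \dots, x_n \in \mathbb{R}$ be pairwise distinct, and let $\theta \in \mathbb{H}$. Then $$q(\theta) = \overline{\,M_\theta^{-1}\!\left(\frac{1}{n}\sum_{j=1}^n M_\theta(x_j)\right)},$$ where $q(\theta) = \theta - n\,h(\theta)/h'(\theta)$ with $h(\theta) = \prod_{j=1}^n (x_j-\theta)$, and $M_\theta(\zeta) = \frac{\zeta-\theta}{\zeta-\overline{\theta}}$ with inverse $M_\theta^{-1}(\zeta) = \frac{\theta - \overline{\theta}\zeta}{1-\zeta}$.
   Context: $\mathbb{H} = \{\theta\in\mathbb{C}:\Im\theta>0\}$; $\overline{\cdot}$ denotes complex conjugation. For $\theta\in\mathbb{H}$, $M_\theta$ is a biholomorphic map from $\mathbb{H}$ onto the open unit disc. *)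

theory Defs
  imports "HOL-Analysis.Analysis"
begin

definition hpoly :: "nat \<Rightarrow> (nat \<Rightarrow> real) \<Rightarrow> complex \<Rightarrow> complex" where
  "hpoly n x \<theta> = (\<Prod>j=1..n. (complex_of_real (x j) - \<theta>))"

definition qmap :: "nat \<Rightarrow> (nat \<Rightarrow> real) \<Rightarrow> complex \<Rightarrow> complex" where
  "qmap n x \<theta> = \<theta> - of_nat n * hpoly n x \<theta> / deriv (hpoly n x) \<theta>"

definition Mob :: "complex \<Rightarrow> complex \<Rightarrow> complex" where
  "Mob \<theta> \<zeta> = (\<zeta> - \<theta>) / (\<zeta> - cnj \<theta>)"

definition Mob_inv :: "complex \<Rightarrow> complex \<Rightarrow> complex" where
  "Mob_inv \<theta> \<zeta> = (\<theta> - cnj \<theta> * \<zeta>) / (1 - \<zeta>)"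

end

theory Submission
  imports Defs
begin

text \<open>With \<open>S(\<theta>) = \<Sum>\<^sub>j 1/(x\<^sub>j - \<theta>)\<close> the logarithmic derivative gives \<open>h'/h = -S\<close>, so
  \<open>q(\<theta>) = \<theta> + n/S(\<theta>)\<close>. On the other side
  \<open>M\<^sub>\<theta>(x) = 1 - (\<theta> - \<theta>\<^sup>*)/(x - \<theta>\<^sup>*)\<close>, so the average of the \<open>M\<^sub>\<theta>(x\<^sub>j)\<close> is
  \<open>1 - (\<theta> - \<theta>\<^sup>*) S(\<theta>\<^sup>*)/n\<close>, and \<open>M\<^sub>\<theta>\<^sup>-\<^sup>1\<close> maps it to \<open>\<theta>\<^sup>* + n/S(\<theta>\<^sup>*)\<close>, the conjugate of
  \<open>q(\<theta>)\<close> because \<open>S(\<theta>\<^sup>*)\<close> is the conjugate of \<open>S(\<theta>)\<close>. The only non-algebraic input is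
  \<open>S(\<theta>) \<noteq> 0\<close>, which holds because every summand has positive imaginary part.\<close>

definition cauchy_sum :: "nat \<Rightarrow> (nat \<Rightarrow> real) \<Rightarrow> complex \<Rightarrow> complex" where
  "cauchy_sum n x \<theta> = (\<Sum>j=1..n. 1 / (complex_of_real (x j) - \<theta>))"

lemma cnj_cauchy_sum: "cnj (cauchy_sum n x \<theta>) = cauchy_sum n x (cnj \<theta>)"
  unfolding cauchy_sum_def by (simp add: cnj_sum)

lemma Im_cauchy_sum_pos:
  assumes "n \<ge> 1" and "Im \<theta> > 0"
  shows "Im (cauchy_sum n x \<theta>) > 0"
proof -
  have "Im (1 / (complex_of_real (x j) - \<theta>)) > 0" for j
  proof -
    have "complex_of_real (x j) - \<theta> \<noteq> 0"
      using assms(2) by (metis Im_complex_of_real eq_iff_diff_eq_0 less_irrefl)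
    moreover have "Im (1 / (complex_of_real (x j) - \<theta>)) = Im \<theta> / (cmod (complex_of_real (x j) - \<theta>))\<^sup>2"
      by (simp add: Im_divide cmod_power2)
    ultimately show ?thesis using assms(2) by simp
  qed
  then have "(\<Sum>j=1..n. Im (1 / (complex_of_real (x j) - \<theta>))) > 0"
    using assms(1) by (intro sum_pos) auto
  then show ?thesis unfolding cauchy_sum_def by (simp add: Im_sum)
qed

lemma deriv_hpoly:
  assumes "\<And>j. j \<in> {1..n} \<Longrightarrow> complex_of_real (x j) \<noteq> \<theta>"
  shows "deriv (hpoly n x) \<theta> = - hpoly n x \<theta> * cauchy_sum n x \<theta>"
proof -
  have "((\<lambda>u. \<Prod>j=1..n. complex_of_real (x j) - u) has_field_derivative
          (\<Prod>j=1..n. complex_of_real (x j) - \<theta>) *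
          (\<Sum>j=1..n. (-1) / (complex_of_real (x j) - \<theta>))) (at \<theta>)"
    by (rule has_field_derivative_prod') (use assms in \<open>auto intro!: derivative_eq_intros\<close>)
  then have "(hpoly n x has_field_derivative - hpoly n x \<theta> * cauchy_sum n x \<theta>) (at \<theta>)"
    unfolding hpoly_def[abs_def] cauchy_sum_def by (simp add: sum_negf)
  then show ?thesis by (rule DERIV_imp_deriv)
qed

lemma qmap_eq_cauchy_sum:
  assumes "\<And>j. j \<in> {1..n} \<Longrightarrow> complex_of_real (x j) \<noteq> \<theta>"
    and "cauchy_sum n x \<theta> \<noteq> 0"
  shows "qmap n x \<theta> = \<theta> + of_nat n / cauchy_sum n x \<theta>"
proof -
  have "hpoly n x \<theta> \<noteq> 0"
    unfolding hpoly_def using assms(1) by simp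
  moreover have "deriv (hpoly n x) \<theta> = - hpoly n x \<theta> * cauchy_sum n x \<theta>"
    using assms(1) by (rule deriv_hpoly)
  ultimately show ?thesis
    using assms(2) unfolding qmap_def by (simp add: field_simps)
qed

lemma Mob_eq_one_minus:
  assumes "\<zeta> \<noteq> cnj \<theta>"
  shows "Mob \<theta> \<zeta> = 1 - (\<theta> - cnj \<theta>) / (\<zeta> - cnj \<theta>)"
  unfolding Mob_def using assms by (simp add: field_simps)

lemma average_Mob_of_real:
  assumes "n \<ge> 1" and "Im \<theta> \<noteq> 0"
  shows "(1 / of_nat n) * (\<Sum>j=1..n. Mob \<theta> (complex_of_real (x j)))
           = 1 - (\<theta> - cnj \<theta>) * (cauchy_sum n x (cnj \<theta>) / of_nat n)"
proof -
  have "complex_of_real (x j) \<noteq> cnj \<theta>" for j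
    using assms(2) by (auto simp: complex_eq_iff)
  then have "(\<Sum>j=1..n. Mob \<theta> (complex_of_real (x j)))
               = (\<Sum>j=1..n. 1 - (\<theta> - cnj \<theta>) / (complex_of_real (x j) - cnj \<theta>))"
    by (simp add: Mob_eq_one_minus)
  then show ?thesis
    unfolding cauchy_sum_def using assms(1)
    by (simp add: sum_subtractf sum_distrib_left field_simps)
qed

lemma Mob_inv_one_minus:
  assumes "\<theta> \<noteq> cnj \<theta>" and "w \<noteq> 0"
  shows "Mob_inv \<theta> (1 - (\<theta> - cnj \<theta>) * w) = cnj \<theta> + 1 / w"
  unfolding Mob_inv_def using assms by (simp add: field_simps)

theorem mainTheorem6:
  fixes n :: nat and x :: "nat \<Rightarrow> real" and \<theta> :: complex
  assumes "n \<ge> 3"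
    and "inj_on x {1..n}"
    and "Im \<theta> > 0"
  shows "qmap n x \<theta> =
    cnj (Mob_inv \<theta> ((1 / of_nat n) * (\<Sum>j=1..n. Mob \<theta> (complex_of_real (x j)))))"
proof -
  have n_pos: "n \<ge> 1" using assms(1) by simp
  have "Im (cauchy_sum n x \<theta>) > 0"
    by (rule Im_cauchy_sum_pos[OF n_pos assms(3)])
  then have S_nz: "cauchy_sum n x \<theta> \<noteq> 0"
    by auto
  have not_root: "complex_of_real (x j) \<noteq> \<theta>" for j
    using assms(3) by auto
  have Im_nz: "Im \<theta> \<noteq> 0"
    using assms(3) by simp
  then have cnj_neq: "\<theta> \<noteq> cnj \<theta>"
    by (auto simp: complex_eq_iff)
  have w_nz: "cauchy_sum n x (cnj \<theta>) / of_nat n \<noteq> 0"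
    using S_nz n_pos by (simp flip: cnj_cauchy_sum)
  have "Mob_inv \<theta> ((1 / of_nat n) * (\<Sum>j=1..n. Mob \<theta> (complex_of_real (x j))))
         = cnj \<theta> + of_nat n / cauchy_sum n x (cnj \<theta>)"
    unfolding average_Mob_of_real[OF n_pos Im_nz] Mob_inv_one_minus[OF cnj_neq w_nz] by simp
  then show ?thesis
    by (simp add: qmap_eq_cauchy_sum[OF not_root S_nz] flip: cnj_cauchy_sum)
qed

end
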